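(* Let $\lambda_1>\lambda_2>\lambda_3>0$ and $D=\mathrm{diag}(\lambda_1,\lambda_2,\lambda_3)$. Then: (i) The rotation $\mathrm{diag}(-1,-1,1)$ is the unique global maximum of $\widetilde W_{1,0}(\cdot;D)$ on $SO(3)$. (ii) If $\lambda_1+\lambda_2>2$, the global minima of $\widetilde W_{1,0}(\cdot;D)$ on $SO(3)$ are exactly the two rotations $$\begin{pmatrix}c & \mp\sqrt{1-c^2} & 0\\ \pm\sqrt{1-c^2} & c & 0\\ 0&0&1\end{pmatrix},\qquad c=\frac{2}{\lambda_1+\lambda_2},$$ with minimal value $(\lambda_3-1)^2+\frac12(\lambda_1-\lambda_2)^2$. (iii) If $\lambda_1+\lambda_2\le2$, then $\mathbb I_3$ is the unique global minimum of $\widetilde W_{1,0}(\cdot;D)$ on $SO(3)$.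
   Context: $\mathrm{sym}(Y)=\tfrac12(Y+Y^T)$, $\|Y\|^2=\mathrm{tr}(Y^TY)$ (Frobenius norm). $\widetilde W_{1,0}(R;D)=\|\mathrm{sym}(R^TD-\mathbb I_3)\|^2$ for $R\in SO(3)$. *)

theory Defs
  imports "HOL-Analysis.Analysis"
begin

type_synonym mat3 = "real^3^3"

definition SO3 :: "mat3 set" where
  "SO3 = {R. orthogonal_matrix R \<and> det R = 1}"

definition sym_part :: "mat3 \<Rightarrow> mat3" where
  "sym_part Y = (1/2) *\<^sub>R (Y + transpose Y)"

definition frob_sq :: "mat3 \<Rightarrow> real" where
  "frob_sq Y = trace (transpose Y ** Y)"

definition W10 :: "mat3 \<Rightarrow> mat3 \<Rightarrow> real" where
  "W10 R D = frob_sq (sym_part (transpose R ** D - mat 1))"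

definition diag3 :: "real \<Rightarrow> real \<Rightarrow> real \<Rightarrow> mat3" where
  "diag3 a b c = vector [vector [a, 0, 0], vector [0, b, 0], vector [0, 0, c]]"

definition rot3 :: "real \<Rightarrow> real \<Rightarrow> mat3" where
  "rot3 c s = vector [vector [c, -s, 0], vector [s, c, 0], vector [0, 0, 1]]"

end

theory Submission
  imports Defs
begin

text \<open>
  On a rotation, orthogonality eliminates the off-diagonal entries, so \<open>W10 R D\<close> becomes a
  quadratic function of the diagonal of \<open>R\<close>. Writing the diagonal through the squared
  components \<open>a, b, c, d\<close> of a unit quaternion (\<open>R\<^sub>1\<^sub>1 = a + b - c - d\<close>, etc.), the
  diagonals of rotations fill exactly a tetrahedron, and on it each claimed extremal value
  differs from \<open>W10\<close> by an expression that is visibly of one sign: a linear form with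
  positive coefficients plus squares. The extremal rotations are the ones where all these
  terms vanish.
\<close>

lemma SO3_iff_entries:
  "R \<in> SO3 \<longleftrightarrow>
   (\<forall>i j. (\<Sum>k\<in>UNIV. R$k$i * R$k$j) = (if i = j then 1 else 0)) \<and>
   (\<forall>i j. (\<Sum>k\<in>UNIV. R$i$k * R$j$k) = (if i = j then 1 else 0)) \<and> det R = 1"
  unfolding SO3_def orthogonal_matrix_def
  by (simp add: vec_eq_iff matrix_matrix_mult_def transpose_def mat_def)

lemma SO3_entry_equations:
  fixes R :: mat3
  assumes "R \<in> SO3"
  shows "(R$1$1)^2+(R$1$2)^2+(R$1$3)^2 = 1" "(R$2$1)^2+(R$2$2)^2+(R$2$3)^2 = 1"
    "(R$3$1)^2+(R$3$2)^2+(R$3$3)^2 = 1"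
    "(R$1$1)^2+(R$2$1)^2+(R$3$1)^2 = 1" "(R$1$2)^2+(R$2$2)^2+(R$3$2)^2 = 1"
    "(R$1$3)^2+(R$2$3)^2+(R$3$3)^2 = 1"
    "R$1$1*R$2$1+R$1$2*R$2$2+R$1$3*R$2$3 = 0" "R$1$1*R$3$1+R$1$2*R$3$2+R$1$3*R$3$3 = 0"
    "R$2$1*R$3$1+R$2$2*R$3$2+R$2$3*R$3$3 = 0"
    "R$1$1*R$2$2*R$3$3 + R$1$2*R$2$3*R$3$1 + R$1$3*R$2$1*R$3$2
       - R$1$1*R$2$3*R$3$2 - R$1$2*R$2$1*R$3$3 - R$1$3*R$2$2*R$3$1 = 1"
proof -
  have col: "\<And>i j. (\<Sum>k\<in>UNIV. R$k$i * R$k$j) = (if i = j then 1 else 0)"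
   and row: "\<And>i j. (\<Sum>k\<in>UNIV. R$i$k * R$j$k) = (if i = j then 1 else 0)"
   and det: "det R = 1" using assms unfolding SO3_iff_entries by blast+
  show "(R$1$1)^2+(R$1$2)^2+(R$1$3)^2 = 1" using row[of 1 1] by (simp add: sum_3 power2_eq_square)
  show "(R$2$1)^2+(R$2$2)^2+(R$2$3)^2 = 1" using row[of 2 2] by (simp add: sum_3 power2_eq_square)
  show "(R$3$1)^2+(R$3$2)^2+(R$3$3)^2 = 1" using row[of 3 3] by (simp add: sum_3 power2_eq_square)
  show "(R$1$1)^2+(R$2$1)^2+(R$3$1)^2 = 1" using col[of 1 1] by (simp add: sum_3 power2_eq_square)
  show "(R$1$2)^2+(R$2$2)^2+(R$3$2)^2 = 1" using col[of 2 2] by (simp add: sum_3 power2_eq_square)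
  show "(R$1$3)^2+(R$2$3)^2+(R$3$3)^2 = 1" using col[of 3 3] by (simp add: sum_3 power2_eq_square)
  show "R$1$1*R$2$1+R$1$2*R$2$2+R$1$3*R$2$3 = 0" using row[of 1 2] by (simp add: sum_3)
  show "R$1$1*R$3$1+R$1$2*R$3$2+R$1$3*R$3$3 = 0" using row[of 1 3] by (simp add: sum_3)
  show "R$2$1*R$3$1+R$2$2*R$3$2+R$2$3*R$3$3 = 0" using row[of 2 3] by (simp add: sum_3)
  show "R$1$1*R$2$2*R$3$3 + R$1$2*R$2$3*R$3$1 + R$1$3*R$2$1*R$3$2
       - R$1$1*R$2$3*R$3$2 - R$1$2*R$2$1*R$3$3 - R$1$3*R$2$2*R$3$1 = 1"
    using det by (simp add: det_3)
qed

text \<open>The third row of a positively oriented orthonormal frame is the cross product of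
  the first two; the squared distance between them expands into terms fixed by the hypotheses.\<close>

lemma orthonormal_det1_entry_eq_minor:
  fixes r11 r12 r13 r21 r22 r23 r31 r32 r33 :: real
  assumes "r11^2+r12^2+r13^2 = 1" and "r21^2+r22^2+r23^2 = 1" and "r31^2+r32^2+r33^2 = 1"
    and "r11*r21+r12*r22+r13*r23 = 0"
    and "r11*r22*r33 + r12*r23*r31 + r13*r21*r32 - r11*r23*r32 - r12*r21*r33 - r13*r22*r31 = 1"
  shows "r33 = r11*r22 - r12*r21"
proof -
  have "(r31 - (r12*r23-r13*r22))^2 + (r32 - (r13*r21-r11*r23))^2 + (r33 - (r11*r22-r12*r21))^2
     = (r31^2+r32^2+r33^2)
       - 2*(r11*r22*r33 + r12*r23*r31 + r13*r21*r32 - r11*r23*r32 - r12*r21*r33 - r13*r22*r31)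
       + ((r11^2+r12^2+r13^2)*(r21^2+r22^2+r23^2) - (r11*r21+r12*r22+r13*r23)^2)"
    by (simp add: power2_eq_square algebra_simps)
  also have "\<dots> = 0" using assms by simp
  finally have "(r33 - (r11*r22-r12*r21))^2 = 0"
    by (smt (verit) zero_le_power2)
  thus ?thesis by simp
qed

lemma SO3_offdiag_products:
  fixes R :: mat3
  assumes "R \<in> SO3"
  shows "R$1$2*R$2$1 = R$1$1*R$2$2 - R$3$3"
    and "R$1$3*R$3$1 = R$1$1*R$3$3 - R$2$2"
    and "R$2$3*R$3$2 = R$2$2*R$3$3 - R$1$1"
proof -
  note E = SO3_entry_equations[OF assms]
  show "R$1$2*R$2$1 = R$1$1*R$2$2 - R$3$3"
    using orthonormal_det1_entry_eq_minor[OF E(1-3,7,10)] by simp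
  show "R$1$3*R$3$1 = R$1$1*R$3$3 - R$2$2"
    using orthonormal_det1_entry_eq_minor[of "R$3$3" "R$3$1" "R$3$2" "R$1$3" "R$1$1" "R$1$2"
        "R$2$3" "R$2$1" "R$2$2"] E(1-3,8,10)
    by (simp add: algebra_simps)
  show "R$2$3*R$3$2 = R$2$2*R$3$3 - R$1$1"
    using orthonormal_det1_entry_eq_minor[of "R$2$2" "R$2$3" "R$2$1" "R$3$2" "R$3$3" "R$3$1"
        "R$1$2" "R$1$3" "R$1$1"] E(1-3,9,10)
    by (simp add: algebra_simps)
qed

lemma SO3_offdiag_square_sums:
  fixes R :: mat3
  assumes "R \<in> SO3"
  shows "(R$1$2)^2 + (R$2$1)^2 = 1 + (R$3$3)^2 - (R$1$1)^2 - (R$2$2)^2"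
    and "(R$1$3)^2 + (R$3$1)^2 = 1 + (R$2$2)^2 - (R$1$1)^2 - (R$3$3)^2"
    and "(R$2$3)^2 + (R$3$2)^2 = 1 + (R$1$1)^2 - (R$2$2)^2 - (R$3$3)^2"
  using SO3_entry_equations[OF assms] by linarith+

lemma SO3_offdiag_squares:
  fixes R :: mat3
  assumes "R \<in> SO3"
  shows "(R$1$2 - R$2$1)^2 = (1+R$1$1+R$2$2+R$3$3)*(1-R$1$1-R$2$2+R$3$3)"
    and "(R$1$2 + R$2$1)^2 = (1+R$1$1-R$2$2-R$3$3)*(1-R$1$1+R$2$2-R$3$3)"
    and "(R$1$3 - R$3$1)^2 = (1+R$1$1+R$2$2+R$3$3)*(1-R$1$1+R$2$2-R$3$3)"
    and "(R$1$3 + R$3$1)^2 = (1+R$1$1-R$2$2-R$3$3)*(1-R$1$1-R$2$2+R$3$3)"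
    and "(R$2$3 - R$3$2)^2 = (1+R$1$1+R$2$2+R$3$3)*(1+R$1$1-R$2$2-R$3$3)"
    and "(R$2$3 + R$3$2)^2 = (1-R$1$1+R$2$2-R$3$3)*(1-R$1$1-R$2$2+R$3$3)"
proof -
  note P = SO3_offdiag_products[OF assms] and S = SO3_offdiag_square_sums[OF assms]
  have sq: "\<And>x y::real. (x - y)^2 = x^2 + y^2 - 2*(x*y)" "\<And>x y::real. (x + y)^2 = x^2 + y^2 + 2*(x*y)"
    by (simp_all add: power2_eq_square algebra_simps)
  show "(R$1$2 - R$2$1)^2 = (1+R$1$1+R$2$2+R$3$3)*(1-R$1$1-R$2$2+R$3$3)"
    unfolding sq S(1) P(1) by (simp add: power2_eq_square algebra_simps)
  show "(R$1$2 + R$2$1)^2 = (1+R$1$1-R$2$2-R$3$3)*(1-R$1$1+R$2$2-R$3$3)"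
    unfolding sq S(1) P(1) by (simp add: power2_eq_square algebra_simps)
  show "(R$1$3 - R$3$1)^2 = (1+R$1$1+R$2$2+R$3$3)*(1-R$1$1+R$2$2-R$3$3)"
    unfolding sq S(2) P(2) by (simp add: power2_eq_square algebra_simps)
  show "(R$1$3 + R$3$1)^2 = (1+R$1$1-R$2$2-R$3$3)*(1-R$1$1-R$2$2+R$3$3)"
    unfolding sq S(2) P(2) by (simp add: power2_eq_square algebra_simps)
  show "(R$2$3 - R$3$2)^2 = (1+R$1$1+R$2$2+R$3$3)*(1+R$1$1-R$2$2-R$3$3)"
    unfolding sq S(3) P(3) by (simp add: power2_eq_square algebra_simps)
  show "(R$2$3 + R$3$2)^2 = (1-R$1$1+R$2$2-R$3$3)*(1-R$1$1-R$2$2+R$3$3)"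
    unfolding sq S(3) P(3) by (simp add: power2_eq_square algebra_simps)
qed

text \<open>The four factors are \<open>4a, 4b, 4c, 4d\<close> for the squared components of a unit quaternion
  representing \<open>R\<close>; here their signs are read off from the pairwise products above.\<close>

lemma SO3_diagonal_quaternion:
  fixes R :: mat3
  assumes "R \<in> SO3"
  obtains a b c d :: real where "0 \<le> a" "0 \<le> b" "0 \<le> c" "0 \<le> d" "a + b + c + d = 1"
    "R$1$1 = a+b-c-d" "R$2$2 = a-b+c-d" "R$3$3 = a-b-c+d"
proof -
  note Q = SO3_offdiag_squares[OF assms]
  define a where "a = (1+R$1$1+R$2$2+R$3$3)/4"
  define b where "b = (1+R$1$1-R$2$2-R$3$3)/4"
  define c where "c = (1-R$1$1+R$2$2-R$3$3)/4"
  define d where "d = (1-R$1$1-R$2$2+R$3$3)/4"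
  have four: "4*a = 1+R$1$1+R$2$2+R$3$3" "4*b = 1+R$1$1-R$2$2-R$3$3"
    "4*c = 1-R$1$1+R$2$2-R$3$3" "4*d = 1-R$1$1-R$2$2+R$3$3"
    unfolding a_def b_def c_def d_def by simp_all
  have "0 \<le> (4*a)*(4*b)" "0 \<le> (4*a)*(4*c)" "0 \<le> (4*a)*(4*d)"
    "0 \<le> (4*b)*(4*c)" "0 \<le> (4*b)*(4*d)" "0 \<le> (4*c)*(4*d)"
    unfolding four Q[symmetric] by simp_all
  hence pairs: "0 \<le> a*b" "0 \<le> a*c" "0 \<le> a*d" "0 \<le> b*c" "0 \<le> b*d" "0 \<le> c*d"
    by (auto simp: zero_le_mult_iff)
  have sum: "a + b + c + d = 1" unfolding a_def b_def c_def d_def by (simp add: field_simps)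
  hence "0 \<le> a \<and> 0 \<le> b \<and> 0 \<le> c \<and> 0 \<le> d"
    using pairs by (auto simp: zero_le_mult_iff)
  with sum show ?thesis
    by (intro that[of a b c d]) (auto simp: a_def b_def c_def d_def field_simps)
qed

lemma SO3_eq_rot3_if_diagonal:
  fixes R :: mat3
  assumes "R \<in> SO3" "R$1$1 = x" "R$2$2 = x" "R$3$3 = 1"
  shows "R = rot3 x (R$2$1)" and "(R$2$1)^2 = 1 - x^2"
proof -
  note E = SO3_entry_equations[OF assms(1)]
  have "(R$3$1)^2 + (R$3$2)^2 = 0" using E(3) assms by simp
  hence z31: "R$3$1 = 0" "R$3$2 = 0" by (simp_all add: sum_power2_eq_zero_iff)
  have "(R$1$3)^2 + (R$2$3)^2 = 0" using E(6) assms by simp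
  hence z13: "R$1$3 = 0" "R$2$3 = 0" by (simp_all add: sum_power2_eq_zero_iff)
  have "(R$1$2 + R$2$1)^2 = 0" using SO3_offdiag_squares(2)[OF assms(1)] assms by simp
  hence "R$1$2 = - R$2$1" by simp
  thus "R = rot3 x (R$2$1)"
    unfolding rot3_def vec_eq_iff forall_3 using assms z31 z13 by simp
  show "(R$2$1)^2 = 1 - x^2" using E(4) assms z31 by simp
qed

lemma rot3_in_SO3:
  assumes "s^2 = 1 - c^2"
  shows "rot3 c s \<in> SO3"
proof -
  have "c * c + s * s = 1" using assms by (simp add: power2_eq_square)
  thus ?thesis
    unfolding SO3_iff_entries forall_3 rot3_def by (simp add: sum_3 det_3 algebra_simps)
qed

lemma diag3_eq_rot3: "diag3 c c 1 = rot3 c 0"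
  unfolding diag3_def rot3_def vec_eq_iff forall_3 by simp

lemma mat1_eq_rot3: "mat 1 = rot3 1 0"
  unfolding mat_def rot3_def vec_eq_iff forall_3 by simp

lemma W10_diag3:
  "W10 R (diag3 l1 l2 l3) =
     (l1 * R$1$1 - 1)^2 + (l2 * R$2$2 - 1)^2 + (l3 * R$3$3 - 1)^2
     + (1/2) * (l2 * R$2$1 + l1 * R$1$2)^2
     + (1/2) * (l3 * R$3$1 + l1 * R$1$3)^2
     + (1/2) * (l3 * R$3$2 + l2 * R$2$3)^2"
  unfolding W10_def frob_sq_def sym_part_def diag3_def
  by (simp add: trace_def sum_3 matrix_matrix_mult_def transpose_def mat_def
       power2_eq_square algebra_simps)

definition W10_diag_form :: "real \<Rightarrow> real \<Rightarrow> real \<Rightarrow> real \<Rightarrow> real \<Rightarrow> real \<Rightarrow> real" where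
  "W10_diag_form l1 l2 l3 t1 t2 t3 = (l1*t1 - 1)^2 + (l2*t2 - 1)^2 + (l3*t3 - 1)^2
     + (1/2) * (l1^2*(1 - t1^2) + l2^2*(1 - t2^2) + l3^2*(1 - t3^2))
     + l1*l2*(t1*t2 - t3) + l1*l3*(t1*t3 - t2) + l2*l3*(t2*t3 - t1)"

text \<open>Expanding the three symmetric off-diagonal squares, the squared entries combine into
  row norms and the cross terms are the products of \<open>SO3_offdiag_products\<close>.\<close>

lemma W10_SO3_diag_form:
  fixes R :: mat3
  assumes "R \<in> SO3"
  shows "W10 R (diag3 l1 l2 l3) = W10_diag_form l1 l2 l3 (R$1$1) (R$2$2) (R$3$3)"
proof -
  note E = SO3_entry_equations[OF assms] and P = SO3_offdiag_products[OF assms]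
  have rows: "(R$1$2)^2 = 1 - (R$1$1)^2 - (R$1$3)^2" "(R$2$3)^2 = 1 - (R$2$2)^2 - (R$2$1)^2"
    "(R$3$1)^2 = 1 - (R$3$3)^2 - (R$3$2)^2"
    using E(1-3) by linarith+
  have binom: "\<And>x y p q::real. (x * p + y * q)^2 = x^2*p^2 + y^2*q^2 + 2*x*y*(q*p)"
    by (simp add: power2_eq_square algebra_simps)
  show ?thesis
    unfolding W10_diag3 binom rows P W10_diag_form_def
    by (simp add: power2_eq_square algebra_simps)
qed

lemma W10_rot3:
  assumes "s^2 = 1 - c^2"
  shows "W10 (rot3 c s) (diag3 l1 l2 l3) = W10_diag_form l1 l2 l3 c c 1"
  using W10_SO3_diag_form[OF rot3_in_SO3[OF assms]] by (simp add: rot3_def)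

section \<open>Sign-definite forms of the energy on the quaternion tetrahedron\<close>

lemma W10_diag_form_half_turn_gap:
  fixes a b c d l1 l2 l3 :: real
  assumes "a + b + c + d = 1"
  shows "((l1+1)^2 + (l2+1)^2 + (l3-1)^2) - W10_diag_form l1 l2 l3 (a+b-c-d) (a-b+c-d) (a-b-c+d)
   = 4*(l1+l2)*a + 4*(l1-l3)*b + 4*(l2-l3)*c
     + 2*(b*c*(l1-l2)^2 + a*d*(l1+l2)^2 + a*c*(l1+l3)^2 + b*d*(l1-l3)^2 + a*b*(l2+l3)^2
          + c*d*(l2-l3)^2)"
proof -
  have a: "a = 1 - b - c - d" using assms by simp
  show ?thesis unfolding a W10_diag_form_def by (simp add: power2_eq_square algebra_simps)
qed

lemma W10_diag_form_rotation_gap: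
  fixes a b c d l1 l2 l3 :: real
  assumes "a + b + c + d = 1"
  shows "W10_diag_form l1 l2 l3 (a+b-c-d) (a-b+c-d) (a-b-c+d) - ((l3-1)^2 + (1/2)*(l1-l2)^2)
   = (1/2)*((l1+l2)*(a-d) - 2 - (2*l3-l1+l2)*b - (2*l3+l1-l2)*c)^2
     + 2*(l1-l3)*(l2+l3)*b + 2*(l2-l3)*(l1+l3)*c"
proof -
  have a: "a = 1 - b - c - d" using assms by simp
  show ?thesis unfolding a W10_diag_form_def by (simp add: power2_eq_square algebra_simps)
qed

lemma W10_diag_form_identity_gap:
  fixes a b c d l1 l2 l3 :: real
  assumes "a + b + c + d = 1"
  shows "W10_diag_form l1 l2 l3 (a+b-c-d) (a-b+c-d) (a-b-c+d) - ((l1-1)^2 + (l2-1)^2 + (l3-1)^2)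
   = 2*(l2+l3)*(2-(l2+l3))*b + 2*(l1+l3)*(2-(l1+l3))*c + 2*(l1+l2)*(2-(l1+l2))*d
     + 2*(b*(l2+l3) + c*(l1+l3) + d*(l1+l2))^2"
proof -
  have a: "a = 1 - b - c - d" using assms by simp
  show ?thesis unfolding a W10_diag_form_def by (simp add: power2_eq_square algebra_simps)
qed

lemma argmin_eqI:
  fixes f :: "'a \<Rightarrow> 'b::order"
  assumes "M \<subseteq> S" "M \<noteq> {}" "\<And>x. x \<in> M \<Longrightarrow> f x = m" "\<And>x. x \<in> S \<Longrightarrow> m \<le> f x"
    "\<And>x. x \<in> S \<Longrightarrow> f x = m \<Longrightarrow> x \<in> M"
  shows "{x \<in> S. \<forall>y\<in>S. f x \<le> f y} = M"
proof
  show "M \<subseteq> {x \<in> S. \<forall>y\<in>S. f x \<le> f y}" using assms(1,3,4) by fastforce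
  show "{x \<in> S. \<forall>y\<in>S. f x \<le> f y} \<subseteq> M"
  proof clarify
    fix x assume x: "x \<in> S" "\<forall>y\<in>S. f x \<le> f y"
    obtain y where "y \<in> M" using assms(2) by blast
    with assms(1,3) x have "f x \<le> m" by force
    with assms(4)[OF x(1)] have "f x = m" by (rule order.antisym[rotated])
    with assms(5) x(1) show "x \<in> M" by blast
  qed
qed

lemma W10_lt_half_turn:
  fixes l1 l2 l3 :: real
  assumes "l3 < l1" "l3 < l2" "0 < l1 + l2" and R: "R \<in> SO3" "R \<noteq> diag3 (-1) (-1) 1"
  shows "W10 R (diag3 l1 l2 l3) < W10 (diag3 (-1) (-1) 1) (diag3 l1 l2 l3)"
proof -
  obtain a b c d where q: "0 \<le> a" "0 \<le> b" "0 \<le> c" "0 \<le> d" "a + b + c + d = 1"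
    "R$1$1 = a+b-c-d" "R$2$2 = a-b+c-d" "R$3$3 = a-b-c+d"
    using SO3_diagonal_quaternion[OF R(1)] by blast
  have max: "W10 (diag3 (-1) (-1) 1) (diag3 l1 l2 l3) = (l1+1)^2 + (l2+1)^2 + (l3-1)^2"
    using W10_rot3[of 0 "-1"] W10_diag_form_half_turn_gap[of 0 0 0 1]
    by (simp add: diag3_eq_rot3)
  have "a \<noteq> 0 \<or> b \<noteq> 0 \<or> c \<noteq> 0"
  proof (rule ccontr)
    assume "\<not> (a \<noteq> 0 \<or> b \<noteq> 0 \<or> c \<noteq> 0)"
    hence "R$1$1 = -1" "R$2$2 = -1" "R$3$3 = 1" using q by auto
    from SO3_eq_rot3_if_diagonal[OF R(1) this] have "R = rot3 (-1) 0" by simp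
    with R(2) show False by (simp add: diag3_eq_rot3)
  qed
  hence "0 < (l1+l2)*a \<or> 0 < (l1-l3)*b \<or> 0 < (l2-l3)*c"
    using q(1-3) assms(1-3) by (auto simp: less_le)
  moreover have "0 \<le> (l1+l2)*a" "0 \<le> (l1-l3)*b" "0 \<le> (l2-l3)*c"
    using q(1-3) assms(1-3) by simp_all
  ultimately have "0 < 4*(l1+l2)*a + 4*(l1-l3)*b + 4*(l2-l3)*c" by linarith
  moreover have "0 \<le> b*c*(l1-l2)^2 + a*d*(l1+l2)^2 + a*c*(l1+l3)^2 + b*d*(l1-l3)^2
      + a*b*(l2+l3)^2 + c*d*(l2-l3)^2"
    using q(1-4) by simp
  ultimately show ?thesis
    using W10_diag_form_half_turn_gap[OF q(5), of l1 l2 l3] W10_SO3_diag_form[OF R(1)] q(6-8) max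
    by simp
qed

lemma W10_ge_offset_rotation_value:
  fixes l1 l2 l3 :: real
  assumes "0 < l3" "l3 < l1" "l3 < l2" and R: "R \<in> SO3"
  shows "(l3-1)^2 + (1/2)*(l1-l2)^2 \<le> W10 R (diag3 l1 l2 l3)"
    and "W10 R (diag3 l1 l2 l3) = (l3-1)^2 + (1/2)*(l1-l2)^2 \<Longrightarrow>
           R = rot3 (2/(l1+l2)) (R$2$1) \<and> (R$2$1)^2 = 1 - (2/(l1+l2))^2"
proof -
  obtain a b c d where q: "0 \<le> a" "0 \<le> b" "0 \<le> c" "0 \<le> d" "a + b + c + d = 1"
    "R$1$1 = a+b-c-d" "R$2$2 = a-b+c-d" "R$3$3 = a-b-c+d"
    using SO3_diagonal_quaternion[OF R] by blast
  define X where "X = (l1+l2)*(a-d) - 2 - (2*l3-l1+l2)*b - (2*l3+l1-l2)*c"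
  have gap: "W10 R (diag3 l1 l2 l3) - ((l3-1)^2 + (1/2)*(l1-l2)^2)
      = (1/2)*X^2 + 2*(l1-l3)*(l2+l3)*b + 2*(l2-l3)*(l1+l3)*c"
    using W10_diag_form_rotation_gap[OF q(5)] W10_SO3_diag_form[OF R] q(6-8) by (simp add: X_def)
  have terms: "0 \<le> (1/2)*X^2" "0 \<le> 2*(l1-l3)*(l2+l3)*b" "0 \<le> 2*(l2-l3)*(l1+l3)*c"
    using assms(1-3) q(2,3) by simp_all
  with gap show "(l3-1)^2 + (1/2)*(l1-l2)^2 \<le> W10 R (diag3 l1 l2 l3)" by linarith
  assume "W10 R (diag3 l1 l2 l3) = (l3-1)^2 + (1/2)*(l1-l2)^2"
  with gap terms have "(1/2)*X^2 = 0" "2*(l1-l3)*(l2+l3)*b = 0" "2*(l2-l3)*(l1+l3)*c = 0"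
    by linarith+
  moreover have "l1 \<noteq> l3" "l2 \<noteq> l3" "l2 + l3 \<noteq> 0" "l1 + l3 \<noteq> 0" using assms(1-3) by simp_all
  ultimately have "b = 0" "c = 0" "(l1+l2)*(a-d) = 2" by (simp_all add: X_def)
  moreover from this(3) have "a - d = 2/(l1+l2)"
    by (metis mult_eq_0_iff nonzero_eq_divide_eq mult.commute zero_neq_numeral)
  ultimately have "R$1$1 = 2/(l1+l2)" "R$2$2 = 2/(l1+l2)" "R$3$3 = 1"
    using q(5-8) by simp_all
  from SO3_eq_rot3_if_diagonal[OF R this]
  show "R = rot3 (2/(l1+l2)) (R$2$1) \<and> (R$2$1)^2 = 1 - (2/(l1+l2))^2" by blast
qed

lemma W10_offset_rotation_value:
  fixes l1 l2 l3 :: real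
  assumes "l1 + l2 \<noteq> 0" "s^2 = 1 - (2/(l1+l2))^2"
  shows "W10 (rot3 (2/(l1+l2)) s) (diag3 l1 l2 l3) = (l3-1)^2 + (1/2)*(l1-l2)^2"
proof -
  define k where "k = 2/(l1+l2)"
  have "(1+k)/2 + 0 + 0 + (1-k)/2 = 1" by (simp add: field_simps)
  from W10_diag_form_rotation_gap[OF this, of l1 l2 l3]
  have "W10_diag_form l1 l2 l3 k k 1 - ((l3-1)^2 + (1/2)*(l1-l2)^2)
      = (1/2)*((l1+l2)*k - 2)^2"
    by (simp add: field_simps)
  also have "(l1+l2)*k = 2" using assms(1) by (simp add: k_def field_simps)
  finally show ?thesis using W10_rot3[OF assms(2)] by (simp add: k_def)
qed

lemma W10_ge_identity_value:
  fixes l1 l2 l3 :: real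
  assumes "0 < l3" "l3 < l1" "l3 < l2" "l1 + l2 \<le> 2" and R: "R \<in> SO3"
  shows "(l1-1)^2 + (l2-1)^2 + (l3-1)^2 \<le> W10 R (diag3 l1 l2 l3)"
    and "W10 R (diag3 l1 l2 l3) = (l1-1)^2 + (l2-1)^2 + (l3-1)^2 \<Longrightarrow> R = mat 1"
proof -
  obtain a b c d where q: "0 \<le> a" "0 \<le> b" "0 \<le> c" "0 \<le> d" "a + b + c + d = 1"
    "R$1$1 = a+b-c-d" "R$2$2 = a-b+c-d" "R$3$3 = a-b-c+d"
    using SO3_diagonal_quaternion[OF R] by blast
  define Y where "Y = b*(l2+l3) + c*(l1+l3) + d*(l1+l2)"
  have gap: "W10 R (diag3 l1 l2 l3) - ((l1-1)^2 + (l2-1)^2 + (l3-1)^2)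
      = 2*(l2+l3)*(2-(l2+l3))*b + 2*(l1+l3)*(2-(l1+l3))*c + 2*(l1+l2)*(2-(l1+l2))*d + 2*Y^2"
    using W10_diag_form_identity_gap[OF q(5)] W10_SO3_diag_form[OF R] q(6-8) by (simp add: Y_def)
  have pos: "0 < (l2+l3)*(2-(l2+l3))" "0 < (l1+l3)*(2-(l1+l3))"
    using assms(1-4) by simp_all
  have terms: "0 \<le> 2*(l2+l3)*(2-(l2+l3))*b" "0 \<le> 2*(l1+l3)*(2-(l1+l3))*c"
      "0 \<le> 2*(l1+l2)*(2-(l1+l2))*d" "0 \<le> 2*Y^2"
    using pos q(2-4) assms(1-4) by simp_all
  with gap show "(l1-1)^2 + (l2-1)^2 + (l3-1)^2 \<le> W10 R (diag3 l1 l2 l3)" by linarith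
  assume "W10 R (diag3 l1 l2 l3) = (l1-1)^2 + (l2-1)^2 + (l3-1)^2"
  with gap terms have "2*(l2+l3)*(2-(l2+l3))*b = 0" "2*(l1+l3)*(2-(l1+l3))*c = 0" "2*Y^2 = 0"
    by linarith+
  moreover have "l2 + l3 \<noteq> 0" "l2 + l3 \<noteq> 2" "l1 + l3 \<noteq> 0" "l1 + l3 \<noteq> 2" "l1 + l2 \<noteq> 0"
    using assms(1-4) by simp_all
  ultimately have "b = 0" "c = 0" "d = 0" by (simp_all add: Y_def)
  hence "R$1$1 = 1" "R$2$2 = 1" "R$3$3 = 1" using q(5-8) by simp_all
  from SO3_eq_rot3_if_diagonal[OF R this] show "R = mat 1" by (simp add: mat1_eq_rot3)
qed

lemma W10_argmin_offset_rotations: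
  fixes l1 l2 l3 :: real
  assumes "0 < l3" "l3 < l1" "l3 < l2" "2 < l1 + l2"
  defines "c \<equiv> 2 / (l1 + l2)"
  shows "{R \<in> SO3. \<forall>Q\<in>SO3. W10 R (diag3 l1 l2 l3) \<le> W10 Q (diag3 l1 l2 l3)}
           = {rot3 c (sqrt (1 - c^2)), rot3 c (- sqrt (1 - c^2))}"
    and "\<forall>R\<in>SO3. (\<forall>Q\<in>SO3. W10 R (diag3 l1 l2 l3) \<le> W10 Q (diag3 l1 l2 l3)) \<longrightarrow>
           W10 R (diag3 l1 l2 l3) = (l3-1)^2 + (1/2)*(l1-l2)^2"
proof -
  have "c^2 \<le> 1" using assms(4) by (simp add: c_def power_le_one)
  hence sqrt: "(sqrt (1 - c^2))^2 = 1 - c^2" "(- sqrt (1 - c^2))^2 = 1 - c^2" by simp_all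
  have sum_nz: "l1 + l2 \<noteq> 0" using assms(4) by simp
  show min: "{R \<in> SO3. \<forall>Q\<in>SO3. W10 R (diag3 l1 l2 l3) \<le> W10 Q (diag3 l1 l2 l3)}
           = {rot3 c (sqrt (1 - c^2)), rot3 c (- sqrt (1 - c^2))}"
  proof (rule argmin_eqI)
    show "{rot3 c (sqrt (1 - c^2)), rot3 c (- sqrt (1 - c^2))} \<subseteq> SO3"
      using rot3_in_SO3[OF sqrt(1)] rot3_in_SO3[OF sqrt(2)] by simp
    show "\<And>R. R \<in> {rot3 c (sqrt (1 - c^2)), rot3 c (- sqrt (1 - c^2))} \<Longrightarrow>
        W10 R (diag3 l1 l2 l3) = (l3-1)^2 + (1/2)*(l1-l2)^2"
      using W10_offset_rotation_value[OF sum_nz] sqrt unfolding c_def by auto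
    show "\<And>R. R \<in> SO3 \<Longrightarrow> (l3-1)^2 + (1/2)*(l1-l2)^2 \<le> W10 R (diag3 l1 l2 l3)"
      using W10_ge_offset_rotation_value(1) assms(1-3) by blast
    fix R assume "R \<in> SO3" "W10 R (diag3 l1 l2 l3) = (l3-1)^2 + (1/2)*(l1-l2)^2"
    from W10_ge_offset_rotation_value(2)[OF assms(1-3) this]
    have "R = rot3 c (R$2$1)" "\<bar>R$2$1\<bar> = sqrt (1 - c^2)"
      unfolding c_def by (auto simp flip: real_sqrt_abs)
    moreover from this(2) have "R$2$1 = sqrt (1 - c^2) \<or> R$2$1 = - sqrt (1 - c^2)" by linarith
    ultimately show "R \<in> {rot3 c (sqrt (1 - c^2)), rot3 c (- sqrt (1 - c^2))}" by auto
  qed simp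
  show "\<forall>R\<in>SO3. (\<forall>Q\<in>SO3. W10 R (diag3 l1 l2 l3) \<le> W10 Q (diag3 l1 l2 l3)) \<longrightarrow>
           W10 R (diag3 l1 l2 l3) = (l3-1)^2 + (1/2)*(l1-l2)^2"
  proof (intro ballI impI)
    fix R assume "R \<in> SO3" "\<forall>Q\<in>SO3. W10 R (diag3 l1 l2 l3) \<le> W10 Q (diag3 l1 l2 l3)"
    with min have "R \<in> {rot3 c (sqrt (1 - c^2)), rot3 c (- sqrt (1 - c^2))}" by blast
    with W10_offset_rotation_value[OF sum_nz] sqrt
    show "W10 R (diag3 l1 l2 l3) = (l3-1)^2 + (1/2)*(l1-l2)^2" unfolding c_def by auto
  qed
qed

lemma W10_argmin_identity:
  fixes l1 l2 l3 :: real
  assumes "0 < l3" "l3 < l1" "l3 < l2" "l1 + l2 \<le> 2"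
  shows "{R \<in> SO3. \<forall>Q\<in>SO3. W10 R (diag3 l1 l2 l3) \<le> W10 Q (diag3 l1 l2 l3)} = {mat 1}"
proof (rule argmin_eqI)
  show "{mat 1} \<subseteq> SO3" using rot3_in_SO3[of 0 1] by (simp add: mat1_eq_rot3)
  show "\<And>R. R \<in> {mat 1} \<Longrightarrow> W10 R (diag3 l1 l2 l3) = (l1-1)^2 + (l2-1)^2 + (l3-1)^2"
    using W10_rot3[of 0 1] by (simp add: mat1_eq_rot3 W10_diag_form_def)
qed (use W10_ge_identity_value[OF assms] in auto)

theorem mainTheorem9:
  fixes l1 l2 l3 :: real
  assumes "l1 > l2" and "l2 > l3" and "l3 > 0"
  defines "D \<equiv> diag3 l1 l2 l3"
  shows "(diag3 (-1) (-1) 1 \<in> SO3 \<and>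
          (\<forall>R\<in>SO3. R \<noteq> diag3 (-1) (-1) 1 \<longrightarrow> W10 R D < W10 (diag3 (-1) (-1) 1) D))
       \<and> (l1 + l2 > 2 \<longrightarrow>
          (let c = 2 / (l1 + l2) in
            {R \<in> SO3. \<forall>Q\<in>SO3. W10 R D \<le> W10 Q D}
              = {rot3 c (sqrt (1 - c^2)), rot3 c (- sqrt (1 - c^2))}
          \<and> (\<forall>R\<in>SO3. (\<forall>Q\<in>SO3. W10 R D \<le> W10 Q D) \<longrightarrow>
                W10 R D = (l3 - 1)^2 + (1/2) * (l1 - l2)^2)))
       \<and> (l1 + l2 \<le> 2 \<longrightarrow> {R \<in> SO3. \<forall>Q\<in>SO3. W10 R D \<le> W10 Q D} = {mat 1})"
proof -
  have l: "0 < l3" "l3 < l1" "l3 < l2" using assms(1-3) by simp_all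
  have "diag3 (-1) (-1) 1 \<in> SO3" using rot3_in_SO3[of 0 "-1"] by (simp add: diag3_eq_rot3)
  moreover have "\<forall>R\<in>SO3. R \<noteq> diag3 (-1) (-1) 1 \<longrightarrow> W10 R D < W10 (diag3 (-1) (-1) 1) D"
    using W10_lt_half_turn[of l3 l1 l2] l unfolding D_def by auto
  ultimately show ?thesis
    using W10_argmin_offset_rotations[OF l] W10_argmin_identity[OF l]
    unfolding D_def Let_def by blast
qed

end
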